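(* Let $x_1,\dots,x_n\in\mathbb{R}^d$ span $\mathbb{R}^d$, let $h:(0,\infty)\to(0,\infty)$, and define $\mathcal{G}:\mathbb{P}_d\to\mathbb{P}_d$ by $\mathcal{G}(S)=\frac{2}{n}\sum_{i=1}^n x_i\,h(x_i^TS^{-1}x_i)\,x_i^T$. If $h$ is log-nonexpansive, i.e., $|\log h(t)-\log h(s)|\le|\log t-\log s|$ for all $s,t>0$, then $\delta_T(\mathcal{G}(S),\mathcal{G}(R))\le\delta_T(S,R)$ for all $S,R\in\mathbb{P}_d$. If moreover $h$ is log-contractive, i.e., $|\log h(t)-\log h(s)|<|\log t-\log s|$ for all $s\neq t$, then $\delta_T(\mathcal{G}(S),\mathcal{G}(R))<\delta_T(S,R)$ for all $S\neq R$.
   Context: $\mathbb{P}_d$ denotes $d\times d$ real symmetric (Hermitian) positive definite matrices. The Thompson metric is $\delta_T(X,Y):=\|\log(Y^{-1/2}XY^{-1/2})\|$ with $\|\cdot\|$ the operator norm. *)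

theory Defs
  imports "HOL-Analysis.Analysis"
begin

definition posdef :: "real^'d^'d \<Rightarrow> bool" where
  "posdef A \<longleftrightarrow> transpose A = A \<and> (\<forall>x. x \<noteq> 0 \<longrightarrow> x \<bullet> (A *v x) > 0)"

definition diag_mat :: "real^'d \<Rightarrow> real^'d^'d" where
  "diag_mat v = (\<chi> i j. if i = j then v $ i else 0)"

definition mat_fun :: "(real \<Rightarrow> real) \<Rightarrow> real^'d^'d \<Rightarrow> real^'d^'d" where
  "mat_fun f A = (SOME B. \<exists>U lam. orthogonal_matrix U \<and>
      A = U ** diag_mat lam ** transpose U \<and>
      B = U ** diag_mat (\<chi> i. f (lam $ i)) ** transpose U)"

definition op_norm :: "real^'d^'d \<Rightarrow> real" where
  "op_norm M = onorm (\<lambda>v. M *v v)"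

definition thompson :: "real^'d^'d \<Rightarrow> real^'d^'d \<Rightarrow> real" where
  "thompson X Y = (let Yh = mat_fun (\<lambda>t. inverse (sqrt t)) Y
                   in op_norm (mat_fun ln (Yh ** X ** Yh)))"

definition outer :: "real^'d \<Rightarrow> real^'d \<Rightarrow> real^'d^'d" where
  "outer x y = (\<chi> a b. x $ a * y $ b)"

definition Gmap :: "nat \<Rightarrow> (nat \<Rightarrow> real^'d) \<Rightarrow> (real \<Rightarrow> real) \<Rightarrow> real^'d^'d \<Rightarrow> real^'d^'d" where
  "Gmap n x h S = (2 / real n) *\<^sub>R
     (\<Sum>i<n. h (x i \<bullet> (matrix_inv S *v x i)) *\<^sub>R outer (x i) (x i))"

definition log_nonexpansive :: "(real \<Rightarrow> real) \<Rightarrow> bool" where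
  "log_nonexpansive h \<longleftrightarrow>
     (\<forall>s t. s > 0 \<longrightarrow> t > 0 \<longrightarrow> \<bar>ln (h t) - ln (h s)\<bar> \<le> \<bar>ln t - ln s\<bar>)"

definition log_contractive :: "(real \<Rightarrow> real) \<Rightarrow> bool" where
  "log_contractive h \<longleftrightarrow>
     (\<forall>s t. s > 0 \<longrightarrow> t > 0 \<longrightarrow> s \<noteq> t \<longrightarrow> \<bar>ln (h t) - ln (h s)\<bar> < \<bar>ln t - ln s\<bar>)"

end

theory Submission
  imports Defs
begin

text \<open>By the spectral theorem, \<open>thompson X Y \<le> c\<close> is equivalent to the Loewner sandwich
  \<open>exp (-c) Y \<le> X \<le> exp c Y\<close>. Inversion reverses the Loewner order, so the scalars
  \<open>x\<^sub>i \<bullet> S\<^sup>-\<^sup>1 x\<^sub>i\<close> and \<open>x\<^sub>i \<bullet> R\<^sup>-\<^sup>1 x\<^sub>i\<close> differ by a factor in \<open>[exp (-c), exp c]\<close> for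
  \<open>c = thompson S R\<close>. A log-nonexpansive \<open>h\<close> preserves this bound on the weights, and
  summing the weighted rank-one terms \<open>x\<^sub>i x\<^sub>i\<^sup>T\<close> yields the same sandwich for \<open>G(S)\<close> and
  \<open>G(R)\<close>. If \<open>h\<close> is log-contractive, each of the finitely many weights satisfies a strict
  bound, and their maximum is a constant \<open>c' < c\<close> that still sandwiches \<open>G(S)\<close> and \<open>G(R)\<close>.\<close>

section \<open>The spectral theorem for real symmetric matrices\<close>

lemma linear_plus_quadratic_nonpos_imp_zero:
  fixes b q :: real
  assumes "\<And>t. 2 * t * b + t\<^sup>2 * q \<le> 0"
  shows "b = 0"
proof (rule ccontr)
  assume "b \<noteq> 0"
  define t where "t = b / (\<bar>q\<bar> + 1)"
  have tq: "\<bar>t * q\<bar> \<le> \<bar>b\<bar>"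
  proof -
    have "\<bar>t * q\<bar> = \<bar>b\<bar> * (\<bar>q\<bar> / (\<bar>q\<bar> + 1))" by (simp add: t_def abs_mult)
    also have "\<dots> \<le> \<bar>b\<bar>" using abs_ge_zero[of q] by (simp add: pos_divide_le_eq distrib_left)
    finally show ?thesis .
  qed
  have "t * (2 * b + t * q) > 0"
  proof (cases "b > 0")
    case True
    then have "t > 0" by (simp add: t_def)
    moreover have "2 * b + t * q > 0" using tq True by linarith
    ultimately show ?thesis by simp
  next
    case False
    then have "b < 0" using \<open>b \<noteq> 0\<close> by simp
    then have "t < 0" by (simp add: t_def divide_neg_pos)
    moreover have "2 * b + t * q < 0" using tq \<open>b < 0\<close> by linarith
    ultimately show ?thesis by (simp add: mult_neg_neg)
  qed
  moreover have "2 * t * b + t\<^sup>2 * q = t * (2 * b + t * q)"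
    by (simp add: algebra_simps power2_eq_square)
  ultimately show False using assms[of t] by linarith
qed

lemma symmetric_matrix_inner_swap:
  fixes A :: "real^'n^'n"
  assumes "transpose A = A"
  shows "(A *v u) \<bullet> w = u \<bullet> (A *v w)"
  by (metis assms dot_lmul_matrix transpose_matrix_vector)

text \<open>A maximiser of the Rayleigh quotient on the unit sphere of \<open>V\<close> is an eigenvector.\<close>

lemma symmetric_invariant_subspace_eigenvector:
  fixes A :: "real^'n^'n"
  assumes sym: "transpose A = A" and V: "subspace V" and inv: "\<And>u. u \<in> V \<Longrightarrow> A *v u \<in> V"
    and nontrivial: "V \<noteq> {0}"
  obtains v l where "v \<in> V" "norm v = 1" "A *v v = l *\<^sub>R v"
proof -
  obtain u where u: "u \<in> V" "u \<noteq> 0" using nontrivial V subspace_0 by blast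
  let ?K = "V \<inter> sphere 0 1"
  have "compact ?K"
    by (intro closed_Int_compact closed_subspace V compact_sphere)
  moreover have "u /\<^sub>R norm u \<in> ?K" using u V by (auto simp: subspace_scale)
  moreover have "continuous_on ?K (\<lambda>x. x \<bullet> (A *v x))"
    by (intro continuous_intros linear_continuous_on) (simp add: bounded_linear_def)
  ultimately obtain v where vK: "v \<in> ?K" and vmax: "\<And>y. y \<in> ?K \<Longrightarrow> y \<bullet> (A *v y) \<le> v \<bullet> (A *v v)"
    using continuous_attains_sup[of ?K] by blast
  have v1: "v \<bullet> v = 1" using vK by (simp add: dot_square_norm)
  define l where "l = v \<bullet> (A *v v)"
  have rayleigh: "w \<bullet> (A *v w) \<le> l * (w \<bullet> w)" if "w \<in> V" for w
  proof (cases "w = 0")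
    case False
    have "w /\<^sub>R norm w \<in> ?K" using \<open>w \<in> V\<close> False V by (auto simp: subspace_scale)
    from vmax[OF this] have "(w \<bullet> (A *v w)) / (norm w)\<^sup>2 \<le> l"
      by (simp add: l_def matrix_vector_mult_scaleR power2_eq_square field_simps)
    then show ?thesis using False by (simp add: dot_square_norm field_simps)
  qed simp
  have "w \<bullet> (A *v v - l *\<^sub>R v) = 0" if "w \<in> V" for w
  proof (rule linear_plus_quadratic_nonpos_imp_zero)
    fix t
    have "v + t *\<^sub>R w \<in> V" using vK \<open>w \<in> V\<close> V by (auto intro: subspace_add subspace_scale)
    from rayleigh[OF this]
    show "2 * t * (w \<bullet> (A *v v - l *\<^sub>R v)) + t\<^sup>2 * (w \<bullet> (A *v w) - l * (w \<bullet> w)) \<le> 0"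
      using symmetric_matrix_inner_swap[OF sym, of w v] inner_commute[of "A *v w" v]
      by (simp add: matrix_vector_right_distrib matrix_vector_mult_scaleR inner_add_left inner_add_right
          inner_diff_right inner_commute[of v w] v1 l_def[symmetric] algebra_simps power2_eq_square)
  qed
  moreover have "A *v v - l *\<^sub>R v \<in> V" using vK inv V by (auto intro: subspace_diff subspace_scale)
  ultimately have "A *v v = l *\<^sub>R v" by fastforce
  then show thesis using vK that by auto
qed

lemma symmetric_invariant_subspace_orthonormal_eigenbasis:
  fixes A :: "real^'n^'n"
  assumes sym: "transpose A = A"
  shows "subspace V \<Longrightarrow> (\<And>u. u \<in> V \<Longrightarrow> A *v u \<in> V) \<Longrightarrow>
    \<exists>B. B \<subseteq> V \<and> pairwise orthogonal B \<and> (\<forall>b\<in>B. norm b = 1 \<and> (\<exists>l. A *v b = l *\<^sub>R b)) \<and> span B = V"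
proof (induction "dim V" arbitrary: V rule: less_induct)
  case less
  show ?case
  proof (cases "V = {0}")
    case True
    then show ?thesis by (intro exI[of _ "{}"]) auto
  next
    case False
    obtain v l where v: "v \<in> V" "norm v = 1" "A *v v = l *\<^sub>R v"
      using symmetric_invariant_subspace_eigenvector[OF sym less.prems False] by blast
    define W where "W = {u \<in> V. u \<bullet> v = 0}"
    have W: "subspace W" using less.prems(1)
      by (auto simp: W_def subspace_def inner_add_left)
    have W_invariant: "A *v u \<in> W" if "u \<in> W" for u
      using that less.prems(2) v symmetric_matrix_inner_swap[OF sym, of u v] by (auto simp: W_def)
    have "v \<notin> W" using v by (auto simp: W_def dot_square_norm)
    moreover have "W \<subseteq> V" by (auto simp: W_def)
    ultimately have "W \<subset> V" using v(1) by blast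
    then have "dim W < dim V" using dim_psubset[of W V] W less.prems(1) by (metis span_eq_iff)
    from less.hyps[OF this W W_invariant] obtain B where
      B: "B \<subseteq> W" "pairwise orthogonal B" "\<forall>b\<in>B. norm b = 1 \<and> (\<exists>l. A *v b = l *\<^sub>R b)" "span B = W"
      by blast
    have "V \<subseteq> span (insert v B)"
    proof
      fix u assume "u \<in> V"
      then have "u - (u \<bullet> v) *\<^sub>R v \<in> W"
        using v less.prems(1) by (auto simp: W_def inner_diff_left dot_square_norm subspace_diff subspace_scale)
      then have "u - (u \<bullet> v) *\<^sub>R v \<in> span (insert v B)"
        using B(4) span_mono[of B "insert v B"] by auto
      moreover have "(u \<bullet> v) *\<^sub>R v \<in> span (insert v B)"
        by (simp add: span_base span_scale)
      ultimately have "u - (u \<bullet> v) *\<^sub>R v + (u \<bullet> v) *\<^sub>R v \<in> span (insert v B)"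
        by (rule span_add)
      then show "u \<in> span (insert v B)" by simp
    qed
    moreover have "insert v B \<subseteq> V" using B(1) v by (auto simp: W_def)
    ultimately have "span (insert v B) = V"
      using less.prems(1) span_minimal by blast
    moreover have "pairwise orthogonal (insert v B)"
      using B(1,2) by (auto simp: pairwise_insert W_def orthogonal_def inner_commute)
    ultimately show ?thesis
      using \<open>insert v B \<subseteq> V\<close> B(3) v by (intro exI[of _ "insert v B"]) auto
  qed
qed

definition orthodiag :: "real^'n^'n \<Rightarrow> real^'n \<Rightarrow> real^'n^'n" where
  "orthodiag U a = U ** diag_mat a ** transpose U"

theorem symmetric_orthodiag:
  fixes A :: "real^'n^'n"
  assumes sym: "transpose A = A"
  obtains U lam where "orthogonal_matrix U" "A = orthodiag U lam"
proof -
  obtain B where B: "pairwise orthogonal B" "\<forall>b\<in>B. norm b = 1 \<and> (\<exists>l. A *v b = l *\<^sub>R b)" "span B = UNIV"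
    using symmetric_invariant_subspace_orthonormal_eigenbasis[OF sym, of UNIV] by auto
  have ind: "independent B"
    using B by (intro pairwise_orthogonal_independent) auto
  have "card B = CARD('n)"
    using dim_eq_card_independent[OF ind] B(3) dim_span[of B] by simp
  then obtain f where f: "bij_betw f (UNIV::'n set) B"
    using finite_same_card_bij[of "UNIV::'n set" B] finiteI_independent[OF ind] by auto
  have fB: "f i \<in> B" for i using f by (auto simp: bij_betw_def)
  have [simp]: "norm (f i) = 1" for i using B(2) fB by blast
  have [simp]: "i \<noteq> j \<Longrightarrow> orthogonal (f i) (f j)" for i j
    using B(1) f by (auto simp: pairwise_def bij_betw_def inj_on_def)
  define U where "U = (\<chi> i j. f j $ i)"
  have oU: "orthogonal_matrix U"
    by (simp add: U_def orthogonal_matrix_orthonormal_columns column_def)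
  define lam where "lam = (\<chi> j. SOME l. A *v f j = l *\<^sub>R f j)"
  have eigen: "A *v f j = (lam $ j) *\<^sub>R f j" for j
    unfolding lam_def using B(2) fB[of j] by (auto intro: someI_ex)
  have "A ** U = U ** diag_mat lam"
  proof -
    have "(A ** U) $ i $ j = (U ** diag_mat lam) $ i $ j" for i j
    proof -
      have "(A ** U) $ i $ j = (A *v f j) $ i"
        by (simp add: U_def matrix_matrix_mult_def matrix_vector_mult_def)
      also have "\<dots> = (U ** diag_mat lam) $ i $ j"
        by (simp add: eigen U_def matrix_matrix_mult_def diag_mat_def if_distrib cong: if_cong)
      finally show ?thesis .
    qed
    then show ?thesis by (simp add: vec_eq_iff)
  qed
  then have "A = U ** diag_mat lam ** transpose U"
    using oU by (metis matrix_mul_assoc matrix_mul_rid orthogonal_matrix_def)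
  then show thesis using that oU by (auto simp: orthodiag_def)
qed

section \<open>Orthogonally diagonalised matrices\<close>

lemma diag_mat_mult: "diag_mat a ** diag_mat b = diag_mat (a * b)"
  by (simp add: vec_eq_iff diag_mat_def matrix_matrix_mult_def if_distrib[of "\<lambda>x. x * y" for y]
      sum.delta cong: if_cong)

lemma diag_mat_mult_vec: "diag_mat a *v z = a * z"
  by (simp add: vec_eq_iff diag_mat_def matrix_vector_mult_def if_distrib[of "\<lambda>x. x * y" for y]
      sum.delta cong: if_cong)

lemma transpose_diag_mat: "transpose (diag_mat a) = diag_mat a"
  by (simp add: vec_eq_iff diag_mat_def transpose_def)

lemma norm_orthogonal_matrix_mult_vec:
  fixes U :: "real^'n^'n"
  assumes "orthogonal_matrix U"
  shows "norm (U *v z) = norm z"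
  using assms orthogonal_transformation_norm orthogonal_transformation_matrix
  by (metis matrix_of_matrix_vector_mul matrix_vector_mul_linear)

lemma orthodiag_mult:
  assumes "orthogonal_matrix U"
  shows "orthodiag U a ** orthodiag U b = orthodiag U (a * b)"
proof -
  have "orthodiag U a ** orthodiag U b = U ** diag_mat a ** (transpose U ** U) ** diag_mat b ** transpose U"
    by (simp add: orthodiag_def matrix_mul_assoc)
  also have "\<dots> = U ** (diag_mat a ** diag_mat b) ** transpose U"
    using assms by (simp add: orthogonal_matrix_def matrix_mul_assoc)
  also have "\<dots> = orthodiag U (a * b)"
    by (simp add: orthodiag_def diag_mat_mult)
  finally show ?thesis .
qed

lemma transpose_orthodiag: "transpose (orthodiag U a) = orthodiag U a"
  by (simp add: orthodiag_def matrix_transpose_mul transpose_diag_mat matrix_mul_assoc)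

lemma orthodiag_one:
  fixes U :: "real^'n^'n"
  assumes "orthogonal_matrix U"
  shows "orthodiag U 1 = mat 1"
proof -
  have "diag_mat (1 :: real^'n) = mat 1" by (simp add: vec_eq_iff diag_mat_def mat_def)
  then show ?thesis using assms by (simp add: orthodiag_def orthogonal_matrix_def)
qed

lemma orthodiag_mult_vec: "orthodiag U a *v v = U *v (a * (transpose U *v v))"
  by (simp add: orthodiag_def matrix_vector_mul_assoc[symmetric] diag_mat_mult_vec
      del: transpose_matrix_vector)

lemma orthodiag_quadratic_form:
  "v \<bullet> (orthodiag U a *v v) = (\<Sum>i\<in>UNIV. a$i * ((transpose U *v v)$i)\<^sup>2)"
proof -
  let ?w = "transpose U *v v"
  have "v \<bullet> (orthodiag U a *v v) = ?w \<bullet> (a * ?w)"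
    by (metis dot_lmul_matrix orthodiag_mult_vec transpose_matrix_vector)
  then show ?thesis
    by (simp add: inner_vec_def power2_eq_square algebra_simps del: transpose_matrix_vector)
qed

lemma
  fixes U :: "real^'n^'n"
  assumes "orthogonal_matrix U"
  shows norm_orthogonal_matrix_column: "norm (U *v axis i 1) = 1"
    and orthodiag_eigenvector: "orthodiag U a *v (U *v axis i 1) = a$i *\<^sub>R (U *v axis i 1)"
    and orthodiag_eigenvalue: "(U *v axis i 1) \<bullet> (orthodiag U a *v (U *v axis i 1)) = a$i"
proof -
  show norm1: "norm (U *v axis i 1) = 1"
    using norm_orthogonal_matrix_mult_vec[OF assms] by simp
  have "transpose U *v (U *v axis i 1) = axis i 1"
    using assms by (simp add: matrix_vector_mul_assoc orthogonal_matrix_def del: transpose_matrix_vector)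
  moreover have "a * axis i 1 = a$i *\<^sub>R axis i 1"
    by (simp add: vec_eq_iff axis_def)
  ultimately show eigen: "orthodiag U a *v (U *v axis i 1) = a$i *\<^sub>R (U *v axis i 1)"
    by (simp add: orthodiag_mult_vec matrix_vector_mult_scaleR del: transpose_matrix_vector)
  show "(U *v axis i 1) \<bullet> (orthodiag U a *v (U *v axis i 1)) = a$i"
    using norm1 by (simp add: eigen dot_square_norm)
qed

lemma op_norm_orthodiag_le_iff:
  fixes U :: "real^'n^'n"
  assumes U: "orthogonal_matrix U"
  shows "op_norm (orthodiag U a) \<le> m \<longleftrightarrow> (\<forall>i. \<bar>a$i\<bar> \<le> m)"
proof
  assume "op_norm (orthodiag U a) \<le> m"
  moreover have "norm (orthodiag U a *v (U *v axis i 1)) \<le> op_norm (orthodiag U a) * norm (U *v axis i 1)" for i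
    unfolding op_norm_def by (rule onorm) simp
  ultimately show "\<forall>i. \<bar>a$i\<bar> \<le> m"
    using norm_orthogonal_matrix_column[OF U] orthodiag_eigenvector[OF U]
    by (metis mult.right_neutral norm_scaleR order.trans)
next
  assume bound: "\<forall>i. \<bar>a$i\<bar> \<le> m"
  then have "0 \<le> m" by (meson abs_ge_zero order_trans)
  show "op_norm (orthodiag U a) \<le> m"
    unfolding op_norm_def
  proof (rule onorm_le)
    fix v :: "real^'n"
    let ?w = "transpose U *v v"
    have "(norm (a * ?w))\<^sup>2 = (\<Sum>i\<in>UNIV. (a$i)\<^sup>2 * (?w$i)\<^sup>2)"
      by (simp add: norm_vec_def L2_set_def power_mult_distrib sum_nonneg del: transpose_matrix_vector)
    also have "\<dots> \<le> (\<Sum>i\<in>UNIV. m\<^sup>2 * (?w$i)\<^sup>2)"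
      using bound \<open>0 \<le> m\<close> by (intro sum_mono mult_right_mono) (auto simp: abs_le_square_iff[symmetric])
    also have "\<dots> = (m * norm ?w)\<^sup>2"
      by (simp add: norm_vec_def L2_set_def power_mult_distrib sum_distrib_left sum_nonneg
          del: transpose_matrix_vector)
    finally have "norm (a * ?w) \<le> m * norm ?w"
      using \<open>0 \<le> m\<close> by (meson norm_ge_zero power2_le_imp_le zero_le_mult_iff)
    then show "norm (orthodiag U a *v v) \<le> m * norm v"
      using U by (simp add: orthodiag_mult_vec norm_orthogonal_matrix_mult_vec del: transpose_matrix_vector)
  qed
qed

lemma orthodiag_quadratic_bounds_iff:
  fixes U :: "real^'n^'n"
  assumes U: "orthogonal_matrix U"
  shows "(\<forall>i. lo \<le> a$i \<and> a$i \<le> hi) \<longleftrightarrow>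
    (\<forall>w. lo * (w \<bullet> w) \<le> w \<bullet> (orthodiag U a *v w) \<and> w \<bullet> (orthodiag U a *v w) \<le> hi * (w \<bullet> w))"
proof
  assume bounds: "\<forall>i. lo \<le> a$i \<and> a$i \<le> hi"
  show "\<forall>w. lo * (w \<bullet> w) \<le> w \<bullet> (orthodiag U a *v w) \<and> w \<bullet> (orthodiag U a *v w) \<le> hi * (w \<bullet> w)"
  proof
    fix w :: "real^'n"
    let ?z = "transpose U *v w"
    have ww: "w \<bullet> w = (\<Sum>i\<in>UNIV. (?z$i)\<^sup>2)"
      using orthodiag_quadratic_form[of w U 1] orthodiag_one[OF U] by simp
    have "(\<Sum>i\<in>UNIV. lo * (?z$i)\<^sup>2) \<le> (\<Sum>i\<in>UNIV. a$i * (?z$i)\<^sup>2)"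
      and "(\<Sum>i\<in>UNIV. a$i * (?z$i)\<^sup>2) \<le> (\<Sum>i\<in>UNIV. hi * (?z$i)\<^sup>2)"
      using bounds by (intro sum_mono mult_right_mono; simp)+
    then show "lo * (w \<bullet> w) \<le> w \<bullet> (orthodiag U a *v w) \<and> w \<bullet> (orthodiag U a *v w) \<le> hi * (w \<bullet> w)"
      by (simp add: ww orthodiag_quadratic_form sum_distrib_left)
  qed
next
  assume "\<forall>w. lo * (w \<bullet> w) \<le> w \<bullet> (orthodiag U a *v w) \<and> w \<bullet> (orthodiag U a *v w) \<le> hi * (w \<bullet> w)"
  then show "\<forall>i. lo \<le> a$i \<and> a$i \<le> hi"
    using orthodiag_eigenvalue[OF U] norm_orthogonal_matrix_column[OF U]
    by (metis dot_square_norm mult.right_neutral power_one)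
qed

lemma posdef_orthodiag_imp_pos:
  fixes U :: "real^'n^'n"
  assumes "orthogonal_matrix U" "posdef (orthodiag U a)"
  shows "a$i > 0"
proof -
  have "U *v axis i 1 \<noteq> 0" using norm_orthogonal_matrix_column[OF assms(1), of i] by auto
  then show ?thesis using assms(2) orthodiag_eigenvalue[OF assms(1), where a=a and i=i] by (auto simp: posdef_def)
qed

text \<open>\<open>mat_fun\<close> is defined by Hilbert choice, so nothing is known about it until the spectral
  theorem shows that the chosen diagonalisation exists.\<close>

lemma mat_fun_orthodiag:
  fixes A :: "real^'n^'n"
  assumes "transpose A = A"
  obtains U lam where "orthogonal_matrix U" "A = orthodiag U lam"
    "mat_fun f A = orthodiag U (\<chi> i. f (lam$i))"
proof -
  have "\<exists>B U lam. orthogonal_matrix U \<and> A = U ** diag_mat lam ** transpose U \<and>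
      B = U ** diag_mat (\<chi> i. f (lam $ i)) ** transpose U"
    using symmetric_orthodiag[OF assms] by (metis orthodiag_def)
  then have "\<exists>U lam. orthogonal_matrix U \<and> A = U ** diag_mat lam ** transpose U \<and>
      mat_fun f A = U ** diag_mat (\<chi> i. f (lam $ i)) ** transpose U"
    unfolding mat_fun_def by (rule someI_ex)
  then show thesis using that by (auto simp: orthodiag_def)
qed

section \<open>The Thompson metric as a Loewner sandwich\<close>

lemma abs_ln_le_iff:
  fixes m c :: real
  assumes "m > 0"
  shows "\<bar>ln m\<bar> \<le> c \<longleftrightarrow> exp (-c) \<le> m \<and> m \<le> exp c"
proof -
  have "ln m \<le> c \<longleftrightarrow> m \<le> exp c" using ln_le_cancel_iff[OF assms exp_gt_zero] by simp
  moreover have "-c \<le> ln m \<longleftrightarrow> exp (-c) \<le> m" by (rule ln_ge_iff[OF assms])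
  ultimately show ?thesis unfolding abs_le_iff by linarith
qed

lemma abs_ln_diff_le_iff:
  fixes a b c :: real
  assumes "a > 0" "b > 0"
  shows "\<bar>ln a - ln b\<bar> \<le> c \<longleftrightarrow> exp (-c) * b \<le> a \<and> a \<le> exp c * b"
  using assms abs_ln_le_iff[of "a / b" c]
  by (simp add: ln_div pos_divide_le_eq pos_le_divide_eq)

lemma inverse_sqrt_congruence:
  fixes Y :: "real^'n^'n"
  assumes "posdef Y"
  defines "H \<equiv> mat_fun (\<lambda>t. inverse (sqrt t)) Y"
  shows "transpose H = H" and "H ** Y ** H = mat 1"
proof -
  obtain U lam where U: "orthogonal_matrix U" and Y: "Y = orthodiag U lam"
    and H: "H = orthodiag U (\<chi> i. inverse (sqrt (lam$i)))"
    using mat_fun_orthodiag[of Y] assms by (auto simp: posdef_def)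
  show "transpose H = H" by (simp add: H transpose_orthodiag)
  have "lam$i > 0" for i using posdef_orthodiag_imp_pos[OF U] assms(1) Y by auto
  then have "lam$i \<noteq> 0" "\<bar>lam$i\<bar> = lam$i" for i by (simp_all add: abs_of_pos order_less_imp_not_eq2)
  then have "(\<chi> i. inverse (sqrt (lam$i))) * lam * (\<chi> i. inverse (sqrt (lam$i))) = 1"
    by (simp add: vec_eq_iff field_simps real_sqrt_mult[symmetric])
  then show "H ** Y ** H = mat 1"
    by (simp add: H Y orthodiag_mult[OF U] orthodiag_one[OF U])
qed

lemma op_norm_mat_fun_ln_le_iff:
  fixes M :: "real^'n^'n"
  assumes "posdef M"
  shows "op_norm (mat_fun ln M) \<le> c \<longleftrightarrow>
    (\<forall>w. exp (-c) * (w \<bullet> w) \<le> w \<bullet> (M *v w) \<and> w \<bullet> (M *v w) \<le> exp c * (w \<bullet> w))"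
proof -
  obtain U mu where U: "orthogonal_matrix U" and M: "M = orthodiag U mu"
    and lnM: "mat_fun ln M = orthodiag U (\<chi> i. ln (mu$i))"
    using mat_fun_orthodiag[of M] assms by (auto simp: posdef_def)
  have "mu$i > 0" for i using posdef_orthodiag_imp_pos[OF U] assms M by auto
  then have "op_norm (mat_fun ln M) \<le> c \<longleftrightarrow> (\<forall>i. exp (-c) \<le> mu$i \<and> mu$i \<le> exp c)"
    by (simp add: lnM op_norm_orthodiag_le_iff[OF U] abs_ln_le_iff)
  also have "\<dots> \<longleftrightarrow> (\<forall>w. exp (-c) * (w \<bullet> w) \<le> w \<bullet> (M *v w) \<and> w \<bullet> (M *v w) \<le> exp c * (w \<bullet> w))"
    unfolding M by (rule orthodiag_quadratic_bounds_iff[OF U])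
  finally show ?thesis .
qed

text \<open>Congruence by \<open>H = Y\<^sup>-\<^sup>1\<^sup>/\<^sup>2\<close> turns \<open>Y\<close> into the identity and \<open>X\<close> into the matrix whose
  logarithm defines the metric; since \<open>H\<close> is invertible, the Loewner bounds transfer back.\<close>

theorem thompson_le_iff:
  fixes X Y :: "real^'n^'n"
  assumes X: "posdef X" and Y: "posdef Y"
  shows "thompson X Y \<le> c \<longleftrightarrow>
    (\<forall>v. exp (-c) * (v \<bullet> (Y *v v)) \<le> v \<bullet> (X *v v) \<and> v \<bullet> (X *v v) \<le> exp c * (v \<bullet> (Y *v v)))"
proof -
  define H where "H = mat_fun (\<lambda>t. inverse (sqrt t)) Y"
  have H: "transpose H = H" and HYH: "H ** Y ** H = mat 1"
    using inverse_sqrt_congruence[OF Y] by (simp_all add: H_def)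
  have H_surj: "H *v (Y *v (H *v v)) = v" for v
    using HYH by (simp add: matrix_vector_mul_assoc matrix_mul_assoc[symmetric])
  have congr: "w \<bullet> ((H ** A ** H) *v w) = (H *v w) \<bullet> (A *v (H *v w))" for A w
    using symmetric_matrix_inner_swap[OF H, of w "A *v (H *v w)"]
    by (simp add: matrix_vector_mul_assoc[symmetric])
  have unit: "w \<bullet> w = (H *v w) \<bullet> (Y *v (H *v w))" for w
    using congr[where A=Y] HYH by simp
  have "posdef (H ** X ** H)"
    unfolding posdef_def
  proof (intro conjI allI impI)
    show "transpose (H ** X ** H) = H ** X ** H"
      using X H by (simp add: posdef_def matrix_transpose_mul matrix_mul_assoc)
    fix w :: "real^'n" assume "w \<noteq> 0"
    then have "H *v w \<noteq> 0" using H_surj[of w] by (metis matrix_vector_mult_0_right)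
    then show "w \<bullet> ((H ** X ** H) *v w) > 0" using X congr by (simp add: posdef_def)
  qed
  then have "thompson X Y \<le> c \<longleftrightarrow> (\<forall>w.
      exp (-c) * ((H *v w) \<bullet> (Y *v (H *v w))) \<le> (H *v w) \<bullet> (X *v (H *v w)) \<and>
      (H *v w) \<bullet> (X *v (H *v w)) \<le> exp c * ((H *v w) \<bullet> (Y *v (H *v w))))"
    by (simp add: thompson_def H_def[symmetric] op_norm_mat_fun_ln_le_iff congr flip: unit)
  also have "\<dots> \<longleftrightarrow>
      (\<forall>v. exp (-c) * (v \<bullet> (Y *v v)) \<le> v \<bullet> (X *v v) \<and> v \<bullet> (X *v v) \<le> exp c * (v \<bullet> (Y *v v)))"
    by (metis H_surj)
  finally show ?thesis .
qed

section \<open>Inverses of positive definite matrices\<close>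

lemma invertible_matrix_inv:
  fixes A :: "'a::semiring_1^'n^'m"
  assumes "invertible A"
  shows "A ** matrix_inv A = mat 1" and "matrix_inv A ** A = mat 1"
  using someI_ex[OF assms[unfolded invertible_def]] by (simp_all add: matrix_inv_def)

lemma posdef_invertible:
  fixes S :: "real^'n^'n"
  assumes "posdef S"
  shows "invertible S"
proof -
  have "inj ((*v) S)"
  proof (rule injI)
    fix u v assume "S *v u = S *v v"
    then have "(u - v) \<bullet> (S *v (u - v)) = 0" by (simp add: matrix_vector_mult_diff_distrib)
    then show "u = v" using assms unfolding posdef_def by (metis less_irrefl right_minus_eq)
  qed
  then show ?thesis
    using matrix_left_invertible_injective invertible_left_inverse by blast
qed

lemma posdef_matrix_inv:
  fixes S :: "real^'n^'n"
  assumes S: "posdef S"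
  shows "posdef (matrix_inv S)"
proof -
  let ?T = "matrix_inv S"
  have ST: "S ** ?T = mat 1"
    using invertible_matrix_inv[OF posdef_invertible[OF S]] by auto
  have "transpose ?T = transpose ?T ** (S ** ?T)" using ST by simp
  also have "\<dots> = transpose (S ** ?T) ** ?T"
    using S by (simp add: posdef_def matrix_transpose_mul matrix_mul_assoc)
  finally have "transpose ?T = ?T" using ST by (simp add: transpose_mat)
  moreover have "v \<bullet> (?T *v v) > 0" if "v \<noteq> 0" for v
  proof -
    have STv: "S *v (?T *v v) = v" using ST by (simp add: matrix_vector_mul_assoc)
    then have "?T *v v \<noteq> 0" using that by auto
    then have "0 < (?T *v v) \<bullet> (S *v (?T *v v))" using S by (simp add: posdef_def)
    then show ?thesis by (simp add: STv inner_commute)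
  qed
  ultimately show ?thesis by (simp add: posdef_def)
qed

lemma matrix_inv_quadratic_pos:
  fixes S :: "real^'n^'n"
  assumes "posdef S" "y \<noteq> 0"
  shows "y \<bullet> (matrix_inv S *v y) > 0"
  using posdef_matrix_inv[OF assms(1)] assms(2) by (simp add: posdef_def)

text \<open>The bound is attained at \<open>w = A\<^sup>-\<^sup>1 v\<close>: the inverse quadratic form is the convex
  conjugate of the quadratic form.\<close>

lemma matrix_inv_quadratic_ge:
  fixes A :: "real^'n^'n"
  assumes A: "posdef A"
  shows "2 * (w \<bullet> v) - w \<bullet> (A *v w) \<le> v \<bullet> (matrix_inv A *v v)"
proof -
  let ?u = "matrix_inv A *v v"
  have Au: "A *v ?u = v"
    using invertible_matrix_inv(1)[OF posdef_invertible[OF A]] by (simp add: matrix_vector_mul_assoc)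
  have uAw: "?u \<bullet> (A *v w) = w \<bullet> v"
    using A symmetric_matrix_inner_swap[of A ?u w] by (simp add: posdef_def Au inner_commute)
  have "0 \<le> (w - ?u) \<bullet> (A *v (w - ?u))"
    using A unfolding posdef_def by (cases "w - ?u = 0") (auto intro: less_imp_le)
  also have "\<dots> = w \<bullet> (A *v w) - 2 * (w \<bullet> v) + v \<bullet> ?u"
    by (simp add: matrix_vector_mult_diff_distrib inner_diff_left inner_diff_right Au uAw
        inner_commute[of ?u v])
  finally show ?thesis by (simp add: inner_commute)
qed

lemma matrix_inv_quadratic_antimono:
  fixes A B :: "real^'n^'n"
  assumes A: "posdef A" and B: "posdef B" and "k > 0"
    and le: "\<And>v. v \<bullet> (A *v v) \<le> k * (v \<bullet> (B *v v))"
  shows "v \<bullet> (matrix_inv B *v v) \<le> k * (v \<bullet> (matrix_inv A *v v))"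
proof -
  let ?q = "v \<bullet> (matrix_inv B *v v)"
  define w where "w = (1 / k) *\<^sub>R (matrix_inv B *v v)"
  have "B *v (matrix_inv B *v v) = v"
    using invertible_matrix_inv(1)[OF posdef_invertible[OF B]] by (simp add: matrix_vector_mul_assoc)
  then have wv: "w \<bullet> v = ?q / k" and wBw: "w \<bullet> (B *v w) = ?q / k\<^sup>2"
    by (simp_all add: w_def matrix_vector_mult_scaleR inner_commute power2_eq_square)
  have "2 * (w \<bullet> v) - k * (w \<bullet> (B *v w)) \<le> 2 * (w \<bullet> v) - w \<bullet> (A *v w)" using le[of w] by simp
  also have "\<dots> \<le> v \<bullet> (matrix_inv A *v v)" by (rule matrix_inv_quadratic_ge[OF A])
  finally have "?q / k \<le> v \<bullet> (matrix_inv A *v v)"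
    using \<open>k > 0\<close> by (simp add: wv wBw field_simps power2_eq_square)
  then show ?thesis using \<open>k > 0\<close> by (simp add: pos_divide_le_eq mult.commute)
qed

lemma symmetric_matrix_eqI_quadratic:
  fixes S R :: "real^'n^'n"
  assumes S: "transpose S = S" and R: "transpose R = R"
    and eq: "\<And>v. v \<bullet> (S *v v) = v \<bullet> (R *v v)"
  shows "S = R"
proof -
  have polarization: "2 * (u \<bullet> (M *v w)) = (u + w) \<bullet> (M *v (u + w)) - u \<bullet> (M *v u) - w \<bullet> (M *v w)"
    if "transpose M = M" for M :: "real^'n^'n" and u w
    using symmetric_matrix_inner_swap[OF that, of w u]
    by (simp add: matrix_vector_right_distrib inner_add_left inner_add_right inner_commute)
  have "u \<bullet> (S *v w) = u \<bullet> (R *v w)" for u w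
    using polarization[OF S, of u w] polarization[OF R, of u w] eq by simp
  then have "(S *v w - R *v w) \<bullet> (S *v w - R *v w) = 0" for w
    by (simp add: inner_diff_right)
  then have "S *v w = R *v w" for w by simp
  then show ?thesis by (simp add: matrix_eq)
qed

lemma exp_neg_mult_le_iff: "exp (-c) * a \<le> b \<longleftrightarrow> a \<le> exp c * (b::real)"
  by (simp add: exp_minus field_simps)

lemma thompson_pos:
  fixes S R :: "real^'n^'n"
  assumes S: "posdef S" and R: "posdef R" and "S \<noteq> R"
  shows "thompson S R > 0"
proof (rule ccontr)
  assume "\<not> thompson S R > 0"
  then have "thompson S R \<le> 0" by simp
  then have bounds: "exp (-0) * (v \<bullet> (R *v v)) \<le> v \<bullet> (S *v v) \<and> v \<bullet> (S *v v) \<le> exp 0 * (v \<bullet> (R *v v))"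
    for v using thompson_le_iff[OF S R] by blast
  have "S = R"
  proof (rule symmetric_matrix_eqI_quadratic)
    show "transpose S = S" "transpose R = R" using S R by (simp_all add: posdef_def)
    fix v
    have "v \<bullet> (R *v v) \<le> v \<bullet> (S *v v) \<and> v \<bullet> (S *v v) \<le> v \<bullet> (R *v v)" using bounds[of v] by simp
    then show "v \<bullet> (S *v v) = v \<bullet> (R *v v)" by linarith
  qed
  with \<open>S \<noteq> R\<close> show False ..
qed

lemma abs_ln_inverse_quadratic_le_thompson:
  fixes S R :: "real^'n^'n"
  assumes S: "posdef S" and R: "posdef R" and "y \<noteq> 0"
  shows "\<bar>ln (y \<bullet> (matrix_inv S *v y)) - ln (y \<bullet> (matrix_inv R *v y))\<bar> \<le> thompson S R"
proof -
  let ?c = "thompson S R"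
  have SR: "v \<bullet> (S *v v) \<le> exp ?c * (v \<bullet> (R *v v))"
    and RS: "v \<bullet> (R *v v) \<le> exp ?c * (v \<bullet> (S *v v))" for v
    using thompson_le_iff[OF S R, of ?c] by (simp_all add: exp_neg_mult_le_iff)
  have "y \<bullet> (matrix_inv R *v y) \<le> exp ?c * (y \<bullet> (matrix_inv S *v y))"
    using S R SR by (rule matrix_inv_quadratic_antimono[OF _ _ exp_gt_zero])
  moreover have "y \<bullet> (matrix_inv S *v y) \<le> exp ?c * (y \<bullet> (matrix_inv R *v y))"
    using R S RS by (rule matrix_inv_quadratic_antimono[OF _ _ exp_gt_zero])
  ultimately show ?thesis
    using abs_ln_diff_le_iff matrix_inv_quadratic_pos[OF S \<open>y \<noteq> 0\<close>] matrix_inv_quadratic_pos[OF R \<open>y \<noteq> 0\<close>]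
    by (simp add: exp_neg_mult_le_iff)
qed

section \<open>The map \<open>G\<close>\<close>

lemma outer_self_mult_vec: "outer x x *v v = (x \<bullet> v) *\<^sub>R x"
  by (simp add: vec_eq_iff outer_def matrix_vector_mult_def inner_vec_def sum_distrib_left mult_ac)

lemma transpose_outer_self: "transpose (outer x x) = outer x x"
  by (simp add: vec_eq_iff transpose_def outer_def mult.commute)

lemma sum_matrix_vector_mult: "finite I \<Longrightarrow> (\<Sum>i\<in>I. M i) *v v = (\<Sum>i\<in>I. M i *v v)"
  by (induction I rule: finite_induct) (auto simp: matrix_vector_mult_add_rdistrib)

lemma transpose_sum: "finite I \<Longrightarrow> transpose (\<Sum>i\<in>I. M i) = (\<Sum>i\<in>I. transpose (M i))"
  by (induction I rule: finite_induct) (auto simp: transpose_def vec_eq_iff)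

lemma transpose_Gmap: "transpose (Gmap n x h S) = Gmap n x h S"
  by (simp add: Gmap_def transpose_scalar transpose_sum transpose_outer_self)

lemma Gmap_quadratic_form:
  "v \<bullet> (Gmap n x h S *v v) = 2 / real n * (\<Sum>i<n. h (x i \<bullet> (matrix_inv S *v x i)) * (x i \<bullet> v)\<^sup>2)"
  by (simp add: Gmap_def scaleR_matrix_vector_assoc[symmetric] sum_matrix_vector_mult outer_self_mult_vec
      inner_sum_right inner_commute[of v] power2_eq_square mult_ac)

lemma span_eq_UNIV_imp_inner_nonzero:
  fixes x :: "nat \<Rightarrow> real^'n"
  assumes spans: "span (x ` {..<n}) = UNIV" and "v \<noteq> 0"
  obtains i where "i < n" "x i \<bullet> v \<noteq> 0"
proof -
  have "\<not> orthogonal v v" using \<open>v \<noteq> 0\<close> by (simp add: orthogonal_def)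
  then have "\<exists>y \<in> x ` {..<n}. \<not> orthogonal v y"
    using orthogonal_to_span[of v "x ` {..<n}" v] spans by auto
  then show thesis using that by (auto simp: orthogonal_def inner_commute)
qed

lemma posdef_Gmap:
  fixes x :: "nat \<Rightarrow> real^'n" and S :: "real^'n^'n"
  assumes spans: "span (x ` {..<n}) = UNIV" and hpos: "\<And>t. t > 0 \<Longrightarrow> h t > 0"
    and S: "posdef S"
  shows "posdef (Gmap n x h S)"
  unfolding posdef_def
proof (intro conjI allI impI transpose_Gmap)
  fix v :: "real^'n" assume "v \<noteq> 0"
  obtain j where j: "j < n" "x j \<bullet> v \<noteq> 0"
    using span_eq_UNIV_imp_inner_nonzero[OF spans \<open>v \<noteq> 0\<close>] .
  let ?f = "\<lambda>i. h (x i \<bullet> (matrix_inv S *v x i)) * (x i \<bullet> v)\<^sup>2"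
  have pos: "0 < ?f i" if "x i \<bullet> v \<noteq> 0" for i
  proof -
    have "x i \<noteq> 0" using that by auto
    then show ?thesis using that hpos[OF matrix_inv_quadratic_pos[OF S]] by simp
  qed
  then have "0 \<le> ?f i" for i by (cases "x i \<bullet> v = 0") (auto intro: less_imp_le)
  then have "0 < (\<Sum>i<n. ?f i)" using j pos[OF j(2)] by (intro sum_pos2[of _ j]) auto
  then show "v \<bullet> (Gmap n x h S *v v) > 0" using j by (simp add: Gmap_quadratic_form)
qed

lemma thompson_Gmap_le:
  fixes x :: "nat \<Rightarrow> real^'n" and S R :: "real^'n^'n"
  assumes spans: "span (x ` {..<n}) = UNIV" and hpos: "\<And>t. t > 0 \<Longrightarrow> h t > 0"
    and S: "posdef S" and R: "posdef R"
    and weights: "\<And>i. i < n \<Longrightarrow> x i \<noteq> 0 \<Longrightarrow>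
       \<bar>ln (h (x i \<bullet> (matrix_inv S *v x i))) - ln (h (x i \<bullet> (matrix_inv R *v x i)))\<bar> \<le> c"
  shows "thompson (Gmap n x h S) (Gmap n x h R) \<le> c"
proof -
  have "exp (-c) * (v \<bullet> (Gmap n x h R *v v)) \<le> v \<bullet> (Gmap n x h S *v v) \<and>
      v \<bullet> (Gmap n x h S *v v) \<le> exp c * (v \<bullet> (Gmap n x h R *v v))" for v
  proof -
    let ?f = "\<lambda>T i. h (x i \<bullet> (matrix_inv T *v x i)) * (x i \<bullet> v)\<^sup>2"
    have "exp (-c) * ?f R i \<le> ?f S i \<and> ?f S i \<le> exp c * ?f R i" if "i < n" for i
    proof (cases "x i = 0")
      case False
      then have "exp (-c) * h (x i \<bullet> (matrix_inv R *v x i)) \<le> h (x i \<bullet> (matrix_inv S *v x i)) \<and>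
          h (x i \<bullet> (matrix_inv S *v x i)) \<le> exp c * h (x i \<bullet> (matrix_inv R *v x i))"
        using weights[OF that] abs_ln_diff_le_iff hpos
          matrix_inv_quadratic_pos[OF S] matrix_inv_quadratic_pos[OF R]
        by simp
      then show ?thesis by (simp add: mult.assoc[symmetric] mult_right_mono)
    qed simp
    then have lower: "exp (-c) * (\<Sum>i<n. ?f R i) \<le> (\<Sum>i<n. ?f S i)"
      and upper: "(\<Sum>i<n. ?f S i) \<le> exp c * (\<Sum>i<n. ?f R i)"
      unfolding sum_distrib_left by (auto intro: sum_mono)
    have "0 \<le> 2 / real n" by simp
    from mult_left_mono[OF lower this] mult_left_mono[OF upper this]
    show ?thesis unfolding Gmap_quadratic_form by (simp add: mult.left_commute)
  qed
  moreover have GS: "posdef (Gmap n x h S)" and GR: "posdef (Gmap n x h R)"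
    using S R by (simp_all add: posdef_Gmap[OF spans hpos])
  ultimately show ?thesis using thompson_le_iff[OF GS GR] by simp
qed

lemma finite_strict_upper_bound:
  fixes f :: "'a \<Rightarrow> real"
  assumes "finite I" and "\<forall>i \<in> I. f i < c" and "0 < c"
  shows "\<exists>c' < c. \<forall>i \<in> I. f i \<le> c'"
  using assms by (intro exI[of _ "Max (insert 0 (f ` I))"]) auto

lemma thompson_Gmap_le_if_log_nonexpansive:
  fixes x :: "nat \<Rightarrow> real^'n" and S R :: "real^'n^'n"
  assumes spans: "span (x ` {..<n}) = UNIV" and hpos: "\<And>t. t > 0 \<Longrightarrow> h t > 0"
    and h: "log_nonexpansive h" and S: "posdef S" and R: "posdef R"
  shows "thompson (Gmap n x h S) (Gmap n x h R) \<le> thompson S R"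
proof (rule thompson_Gmap_le[OF spans hpos S R])
  fix i assume "x i \<noteq> 0"
  let ?s = "x i \<bullet> (matrix_inv S *v x i)" and ?r = "x i \<bullet> (matrix_inv R *v x i)"
  have "\<bar>ln (h ?s) - ln (h ?r)\<bar> \<le> \<bar>ln ?s - ln ?r\<bar>"
    using h matrix_inv_quadratic_pos[OF S \<open>x i \<noteq> 0\<close>] matrix_inv_quadratic_pos[OF R \<open>x i \<noteq> 0\<close>]
    by (simp add: log_nonexpansive_def)
  also have "\<dots> \<le> thompson S R"
    by (rule abs_ln_inverse_quadratic_le_thompson[OF S R \<open>x i \<noteq> 0\<close>])
  finally show "\<bar>ln (h ?s) - ln (h ?r)\<bar> \<le> thompson S R" .
qed

lemma thompson_Gmap_less_if_log_contractive:
  fixes x :: "nat \<Rightarrow> real^'n" and S R :: "real^'n^'n"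
  assumes spans: "span (x ` {..<n}) = UNIV" and hpos: "\<And>t. t > 0 \<Longrightarrow> h t > 0"
    and h: "log_contractive h" and S: "posdef S" and R: "posdef R" and "S \<noteq> R"
  shows "thompson (Gmap n x h S) (Gmap n x h R) < thompson S R"
proof -
  let ?s = "\<lambda>i. x i \<bullet> (matrix_inv S *v x i)" and ?r = "\<lambda>i. x i \<bullet> (matrix_inv R *v x i)"
  define I where "I = {i. i < n \<and> x i \<noteq> 0}"
  have pos: "0 < thompson S R" using thompson_pos[OF S R \<open>S \<noteq> R\<close>] .
  have less: "\<forall>i \<in> I. \<bar>ln (h (?s i)) - ln (h (?r i))\<bar> < thompson S R"
  proof
    fix i assume "i \<in> I"
    then have "x i \<noteq> 0" by (simp add: I_def)
    show "\<bar>ln (h (?s i)) - ln (h (?r i))\<bar> < thompson S R"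
    proof (cases "?s i = ?r i")
      case False
      then have "\<bar>ln (h (?s i)) - ln (h (?r i))\<bar> < \<bar>ln (?s i) - ln (?r i)\<bar>"
        using h \<open>x i \<noteq> 0\<close> matrix_inv_quadratic_pos[OF S] matrix_inv_quadratic_pos[OF R]
        by (simp add: log_contractive_def)
      also have "\<dots> \<le> thompson S R"
        by (rule abs_ln_inverse_quadratic_le_thompson[OF S R \<open>x i \<noteq> 0\<close>])
      finally show ?thesis .
    qed (simp add: pos)
  qed
  have "finite I" by (simp add: I_def)
  from finite_strict_upper_bound[OF this less pos]
  obtain c where "c < thompson S R" and bound: "\<forall>i \<in> I. \<bar>ln (h (?s i)) - ln (h (?r i))\<bar> \<le> c"
    by (elim exE conjE)
  moreover have "thompson (Gmap n x h S) (Gmap n x h R) \<le> c"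
  proof (rule thompson_Gmap_le[OF spans hpos S R])
    fix i assume "i < n" "x i \<noteq> 0"
    then show "\<bar>ln (h (?s i)) - ln (h (?r i))\<bar> \<le> c" by (simp add: bound I_def)
  qed
  ultimately show ?thesis by linarith
qed

theorem proposition38:
  fixes n :: nat and x :: "nat \<Rightarrow> real^'d" and h :: "real \<Rightarrow> real"
  assumes spans: "span (x ` {..<n}) = UNIV"
    and hpos: "\<And>t. t > 0 \<Longrightarrow> h t > 0"
  shows "(log_nonexpansive h \<longrightarrow>
            (\<forall>S R. posdef S \<and> posdef R \<longrightarrow>
               thompson (Gmap n x h S) (Gmap n x h R) \<le> thompson S R))
       \<and> (log_contractive h \<longrightarrow>
            (\<forall>S R. posdef S \<and> posdef R \<and> S \<noteq> R \<longrightarrow>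
               thompson (Gmap n x h S) (Gmap n x h R) < thompson S R))"
  using thompson_Gmap_le_if_log_nonexpansive[where h = h, OF spans hpos]
    thompson_Gmap_less_if_log_contractive[where h = h, OF spans hpos]
  by blast

end
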